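(* There exists a perfectly nested $(k,\lambda)$-GDD of type $t^u$ only if all of the following hold: $k=2\lambda+1$; $\lambda t(u-1)\equiv 0 \pmod{k-1}$; $(\lambda+1)t(u-1)\equiv 0\pmod{k}$; $(\lambda+1)t^2u(u-1)\equiv 0 \pmod{(k+1)k}$; $t(u-1)\equiv 0\pmod{2k}$; and $u\ge k+1$.
   Context: A $(k,\lambda)$-group-divisible design (GDD) of type $t^u$ is a triple $(X,\mathcal{G},\mathcal{A})$ where $X$ is a set of $tu$ points, $\mathcal{G}$ is a partition of $X$ into $u$ groups of size $t$, and $\mathcal{A}$ is a multiset of $k$-subsets of $X$ (blocks) such that each block meets each group in at most one point and every pair of points from different groups lies in exactly $\lambda$ blocks. A partial $(k,\lambda)$-GDD of type $t^u$ is the same except that every pair of points from distinct groups lies in at most $\lambda$ blocks (and pairs from the same group lie in no block). A $(k,\lambda)$-GDD of type $t^u$ is nested if there is a map $\phi:\mathcal{A}\to X$ such that $(X,\mathcal{G},\{A\cup\{\phi(A)\}:A\in\mathcal{A}\})$ is a partial $(k+1,\lambda+1)$-GDD of type $t^u$; the nesting is perfect if this augmented structure is a $(k+1,\lambda+1)$-GDD of type $t^u$. *)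

theory Defs
  imports Main
begin

definition group_partition :: "nat \<Rightarrow> nat \<Rightarrow> 'a set \<Rightarrow> 'a set set \<Rightarrow> bool" where
  "group_partition t u X G \<longleftrightarrow>
     finite X \<and> card X = t * u \<and> finite G \<and> card G = u \<and> \<Union>G = X \<and>
     (\<forall>g\<in>G. g \<subseteq> X \<and> card g = t) \<and>
     (\<forall>g\<in>G. \<forall>h\<in>G. g \<noteq> h \<longrightarrow> g \<inter> h = {})"

definition diff_groups :: "'a set set \<Rightarrow> 'a \<Rightarrow> 'a \<Rightarrow> bool" where
  "diff_groups G x y \<longleftrightarrow> (\<forall>g\<in>G. \<not> (x \<in> g \<and> y \<in> g))"

text \<open>Blocks form a multiset, represented as a finite indexed family B over index set I
  (repeated blocks = distinct indices with equal sets).  Number of blocks containing x and y:\<close>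
definition pair_count :: "'i set \<Rightarrow> ('i \<Rightarrow> 'a set) \<Rightarrow> 'a \<Rightarrow> 'a \<Rightarrow> nat" where
  "pair_count I B x y = card {i\<in>I. x \<in> B i \<and> y \<in> B i}"

definition block_conditions :: "nat \<Rightarrow> 'a set \<Rightarrow> 'a set set \<Rightarrow> 'i set \<Rightarrow> ('i \<Rightarrow> 'a set) \<Rightarrow> bool" where
  "block_conditions k X G I B \<longleftrightarrow> finite I \<and>
     (\<forall>i\<in>I. B i \<subseteq> X \<and> card (B i) = k \<and> (\<forall>g\<in>G. card (B i \<inter> g) \<le> 1))"

definition is_gdd :: "nat \<Rightarrow> nat \<Rightarrow> nat \<Rightarrow> nat \<Rightarrow> 'a set \<Rightarrow> 'a set set \<Rightarrow> 'i set \<Rightarrow> ('i \<Rightarrow> 'a set) \<Rightarrow> bool" where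
  "is_gdd k lam t u X G I B \<longleftrightarrow> group_partition t u X G \<and> block_conditions k X G I B \<and>
     (\<forall>x\<in>X. \<forall>y\<in>X. diff_groups G x y \<longrightarrow> pair_count I B x y = lam)"

definition is_perfect_nesting :: "nat \<Rightarrow> nat \<Rightarrow> nat \<Rightarrow> nat \<Rightarrow> 'a set \<Rightarrow> 'a set set \<Rightarrow> 'i set \<Rightarrow> ('i \<Rightarrow> 'a set) \<Rightarrow> ('i \<Rightarrow> 'a) \<Rightarrow> bool" where
  "is_perfect_nesting k lam t u X G I B \<phi> \<longleftrightarrow> (\<forall>i\<in>I. \<phi> i \<in> X) \<and>
     is_gdd (Suc k) (Suc lam) t u X G I (\<lambda>i. insert (\<phi> i) (B i))"

definition perfectly_nested_gdd :: "nat \<Rightarrow> nat \<Rightarrow> nat \<Rightarrow> nat \<Rightarrow> 'a set \<Rightarrow> 'a set set \<Rightarrow> 'i set \<Rightarrow> ('i \<Rightarrow> 'a set) \<Rightarrow> bool" where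
  "perfectly_nested_gdd k lam t u X G I B \<longleftrightarrow> is_gdd k lam t u X G I B \<and>
     (\<exists>\<phi>. is_perfect_nesting k lam t u X G I B \<phi>)"

end

theory Submission
  imports Defs
begin

text \<open>Let b be the number of blocks and m = t (u - 1) the number of points outside the group
  of a given point.  Counting incidences in the GDD and in its augmentation, which share the same
  b blocks, gives b k (k - 1) = \<lambda> t u m and b (k + 1) k = (\<lambda> + 1) t u m; comparing the two
  forces k = 2\<lambda> + 1.  A point lies in r blocks and r' augmented blocks with r (k - 1) = \<lambda> m
  and r' k = (\<lambda> + 1) m, so m = 2r is even and divisible by the odd number k.  Finally an
  augmented block meets k + 1 distinct groups, so u \<ge> k + 1.\<close>

lemma block_points_diff_groups:
  assumes "block_conditions k X G I B" and "finite X" and "i \<in> I"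
    and "x \<in> B i" and "y \<in> B i" and "x \<noteq> y"
  shows "diff_groups G x y"
  unfolding diff_groups_def
proof (intro ballI notI)
  fix g assume "g \<in> G" and xy: "x \<in> g \<and> y \<in> g"
  have "B i \<subseteq> X" and "card (B i \<inter> g) \<le> Suc 0"
    using assms(1,3) \<open>g \<in> G\<close> unfolding block_conditions_def by auto
  then have "\<forall>a\<in>B i \<inter> g. \<forall>b\<in>B i \<inter> g. a = b"
    using \<open>finite X\<close> by (meson card_le_Suc0_iff_eq finite_Int finite_subset)
  then show False
    using xy assms(4-6) by blast
qed

lemma group_partition_card_other_groups:
  assumes "group_partition t u X G" and "x \<in> X"
  shows "card {y\<in>X. diff_groups G x y} = t * (u - 1)"
proof -
  obtain g where g: "g \<in> G" "x \<in> g"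
    using assms unfolding group_partition_def by blast
  have "{y\<in>X. diff_groups G x y} = X - g"
    using assms(1) g unfolding group_partition_def diff_groups_def by blast
  moreover have "g \<subseteq> X" "card g = t" "finite X" "card X = t * u"
    using assms(1) g unfolding group_partition_def by auto
  ultimately show ?thesis
    by (simp add: card_Diff_subset finite_subset diff_mult_distrib2)
qed

lemma gdd_replication:
  assumes gdd: "is_gdd k lam t u X G I B" and "x \<in> X"
  shows "card {i\<in>I. x \<in> B i} * (k - 1) = lam * (t * (u - 1))"
proof -
  define Y where "Y = {y\<in>X. diff_groups G x y}"
  define Ix where "Ix = {i\<in>I. x \<in> B i}"
  have part: "group_partition t u X G" and blocks: "block_conditions k X G I B"
    using gdd unfolding is_gdd_def by auto
  have "finite X" "finite I"
    using part blocks unfolding group_partition_def block_conditions_def by auto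
  have "x \<notin> Y"
    using part \<open>x \<in> X\<close> unfolding Y_def diff_groups_def group_partition_def by blast
  have through_x: "card {y\<in>Y. y \<in> B i} = k - 1" if "i \<in> Ix" for i
  proof -
    have "i \<in> I" "x \<in> B i"
      using that unfolding Ix_def by auto
    then have "B i \<subseteq> X" "card (B i) = k"
      using blocks unfolding block_conditions_def by auto
    moreover have "{y\<in>Y. y \<in> B i} = B i - {x}"
      using block_points_diff_groups[OF blocks \<open>finite X\<close> \<open>i \<in> I\<close> \<open>x \<in> B i\<close>]
        \<open>B i \<subseteq> X\<close> \<open>x \<notin> Y\<close> unfolding Y_def by auto
    ultimately show ?thesis
      using \<open>x \<in> B i\<close> \<open>finite X\<close> by (simp add: finite_subset)
  qed
  have with_x: "card {i\<in>Ix. y \<in> B i} = lam" if "y \<in> Y" for y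
  proof -
    have "{i\<in>Ix. y \<in> B i} = {i\<in>I. x \<in> B i \<and> y \<in> B i}"
      unfolding Ix_def by auto
    then show ?thesis
      using gdd \<open>x \<in> X\<close> that unfolding is_gdd_def pair_count_def Y_def by auto
  qed
  have "(\<Sum>y\<in>Y. card {i\<in>Ix. y \<in> B i}) = (k - 1) * card Ix"
    using \<open>finite X\<close> \<open>finite I\<close> through_x unfolding Y_def Ix_def
    by (intro sum_multicount) auto
  then have "card Y * lam = (k - 1) * card Ix"
    using with_x by simp
  then show ?thesis
    using group_partition_card_other_groups[OF part \<open>x \<in> X\<close>]
    unfolding Y_def Ix_def by (metis mult.commute)
qed

lemma gdd_block_count:
  assumes gdd: "is_gdd k lam t u X G I B"
  shows "card I * k * (k - 1) = lam * (t * u) * (t * (u - 1))"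
proof -
  have "finite X" "card X = t * u" "finite I"
    using gdd unfolding is_gdd_def group_partition_def block_conditions_def by auto
  moreover have "card {x\<in>X. x \<in> B i} = k" if "i \<in> I" for i
  proof -
    have "B i \<subseteq> X" "card (B i) = k"
      using gdd that unfolding is_gdd_def block_conditions_def by auto
    moreover have "{x\<in>X. x \<in> B i} = B i"
      using \<open>B i \<subseteq> X\<close> by blast
    ultimately show ?thesis
      by simp
  qed
  ultimately have "(\<Sum>x\<in>X. card {i\<in>I. x \<in> B i}) = k * card I"
    by (intro sum_multicount) auto
  then have "card I * k * (k - 1) = (\<Sum>x\<in>X. card {i\<in>I. x \<in> B i}) * (k - 1)"
    by (simp add: mult.commute)
  also have "\<dots> = (\<Sum>x\<in>X. card {i\<in>I. x \<in> B i} * (k - 1))"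
    by (rule sum_distrib_right)
  also have "\<dots> = (\<Sum>x\<in>X. lam * (t * (u - 1)))"
    using gdd_replication[OF gdd] by simp
  finally show ?thesis
    using \<open>card X = t * u\<close> by simp
qed

lemma block_size_le_groups:
  assumes "group_partition t u X G" and "block_conditions k X G I B" and "i \<in> I"
  shows "k \<le> u"
proof -
  have "finite G" "card G = u" "B i = (\<Union>g\<in>G. B i \<inter> g)"
    and "card (B i) = k" and meets: "\<forall>g\<in>G. card (B i \<inter> g) \<le> 1"
    using assms unfolding group_partition_def block_conditions_def by auto
  then have "k \<le> (\<Sum>g\<in>G. card (B i \<inter> g))"
    using card_UN_le[of G "\<lambda>g. B i \<inter> g"] by simp
  also have "\<dots> \<le> (\<Sum>g\<in>G. 1)"
    using meets by (intro sum_mono) auto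
  finally show ?thesis
    using \<open>card G = u\<close> by simp
qed

lemma block_size_from_block_counts:
  fixes b k lam T :: nat
  assumes "b * k * (k - 1) = lam * T" and "b * (k + 1) * k = (lam + 1) * T" and "T > 0"
  shows "k = 2 * lam + 1"
proof -
  have "b * k > 0"
    using assms(2,3) by (metis add_gr_0 mult_is_0 neq0_conv zero_less_one)
  have "b * k * ((k - 1) * (lam + 1)) = lam * T * (lam + 1)"
    using assms(1) by (metis mult.assoc)
  also have "\<dots> = lam * ((lam + 1) * T)"
    by (simp only: ac_simps)
  also have "\<dots> = b * k * ((k + 1) * lam)"
    unfolding assms(2)[symmetric] by (simp only: ac_simps)
  finally have "(k - 1) * (lam + 1) = (k + 1) * lam"
    using \<open>b * k > 0\<close> by simp
  moreover have "k \<ge> 1"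
    using \<open>b * k > 0\<close> by simp
  ultimately show ?thesis
    by (cases k) (auto simp: algebra_simps)
qed

lemma double_block_size_dvd:
  fixes lam m r r' :: nat
  assumes "lam \<ge> 1" and "r * (2 * lam) = lam * m" and "r' * (2 * lam + 1) = (lam + 1) * m"
  shows "2 * (2 * lam + 1) dvd m"
proof -
  have "m = 2 * r"
    using assms(1,2) by (simp add: algebra_simps)
  have "2 * lam + 1 dvd 2 * ((lam + 1) * m)"
    using assms(3) by (metis dvd_mult dvd_triv_right)
  moreover have "2 * ((lam + 1) * m) = (2 * lam + 1) * m + m"
    by (simp add: algebra_simps)
  ultimately have "2 * lam + 1 dvd m"
    by (metis dvd_add_right_iff dvd_triv_left)
  moreover have "coprime 2 (2 * lam + 1)"
    by simp
  ultimately show ?thesis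
    using divides_mult[of 2 m "2 * lam + 1"] \<open>m = 2 * r\<close> by simp
qed

theorem mainTheorem6:
  fixes k lam t u :: nat and X :: "'a set" and G :: "'a set set"
    and I :: "'i set" and B :: "'i \<Rightarrow> 'a set"
  assumes "lam \<ge> 1" and "t \<ge> 1" and "u \<ge> 2"
    and "perfectly_nested_gdd k lam t u X G I B"
  shows "k = 2 * lam + 1 \<and>
         (lam * t * (u - 1)) mod (k - 1) = 0 \<and>
         ((lam + 1) * t * (u - 1)) mod k = 0 \<and>
         ((lam + 1) * t^2 * u * (u - 1)) mod ((k + 1) * k) = 0 \<and>
         (t * (u - 1)) mod (2 * k) = 0 \<and>
         u \<ge> k + 1"
proof -
  obtain \<phi> where gdd: "is_gdd k lam t u X G I B"
    and nested: "is_gdd (Suc k) (Suc lam) t u X G I (\<lambda>i. insert (\<phi> i) (B i))"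
    using assms(4) unfolding perfectly_nested_gdd_def is_perfect_nesting_def by blast
  define m where "m = t * (u - 1)"
  have "m > 0" "t * u > 0"
    using assms(2,3) unfolding m_def by auto
  then obtain x where "x \<in> X"
    using gdd unfolding is_gdd_def group_partition_def by (metis card.empty ex_in_conv less_irrefl)
  define r where "r = card {i\<in>I. x \<in> B i}"
  define r' where "r' = card {i\<in>I. x \<in> insert (\<phi> i) (B i)}"
  have rep: "r * (k - 1) = lam * m" and rep': "r' * k = (lam + 1) * m"
    using gdd_replication[OF gdd \<open>x \<in> X\<close>] gdd_replication[OF nested \<open>x \<in> X\<close>]
    unfolding r_def r'_def m_def by simp_all
  have blocks: "card I * k * (k - 1) = lam * (t * u * m)"
    and blocks': "card I * (k + 1) * k = (lam + 1) * (t * u * m)"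
    using gdd_block_count[OF gdd] gdd_block_count[OF nested] unfolding m_def
    by (simp_all only: Suc_eq_plus1 add_diff_cancel_right' mult.assoc)
  have k: "k = 2 * lam + 1"
    using block_size_from_block_counts[OF blocks blocks'] \<open>m > 0\<close> \<open>t * u > 0\<close> by simp
  have "2 * k dvd m"
    using double_block_size_dvd[OF assms(1)] rep rep' k by simp
  have "I \<noteq> {}"
    using rep' \<open>m > 0\<close> unfolding r'_def by auto
  then obtain i where "i \<in> I"
    by blast
  then have "k + 1 \<le> u"
    using block_size_le_groups nested unfolding is_gdd_def by fastforce
  moreover have "lam * t * (u - 1) = r * (k - 1)" and "(lam + 1) * t * (u - 1) = r' * k"
    using rep rep' unfolding m_def by (simp_all only: mult.assoc)
  moreover have "(lam + 1) * t^2 * u * (u - 1) = card I * ((k + 1) * k)"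
    using blocks' unfolding m_def by (simp add: power2_eq_square algebra_simps)
  ultimately show ?thesis
    using k \<open>2 * k dvd m\<close> unfolding m_def dvd_eq_mod_eq_0[symmetric]
    by (metis dvd_triv_left dvd_triv_right)
qed

end
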